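(* Let $(\epsilon_i)_{i\in\mathbb{Z}}$ be i.i.d. real random variables with density $f_\epsilon$, and let $Z_k=\sum_{i=0}^\infty a_i\epsilon_{k-i}$ be a causal stationary linear process whose marginal distribution has cumulative distribution function $F_Z$ and density $f_Z$. Let $g$ be strictly increasing and differentiable, and $Y_k=g(Z_k)$. Let $\widehat g(x)=\xi_n^Y(F_Z(x))$, where $\xi_n^Y(p)=\inf\{y\mid F_n^Y(y)\ge p\}$ and $F_n^Y(y)=\frac1n\sum_{i=1}^n\mathbf{1}_{Y_i\le y}$. (i) Assume $\sup_{x\in\mathbb{R}}\big(f_\epsilon(x)+|f_\epsilon'(x)|\big)<\infty$ and that there exist $\alpha>0$, $q>2$ with $\mathbb{E}|\epsilon_k|^\alpha<\infty$ and $\sum_{i=n}^\infty|a_i|^{\min(\alpha/q,1)}=O((\log n)^{-1/q})$. Then for every $x$ with $f_Z(x)>0$, $\widehat g(x)\to g(x)$ almost surely. (ii) Assume instead that $\sup_{x\in\mathbb{R}}|f_\epsilon''(x)|<\infty$, that $\mathbb{E}|\epsilon_k|^\alpha<\infty$ for some $\alpha>0$, and that $\sum_{i=1}^\infty|a_i|^{\min(\alpha/q,1)}<\infty$ for some $q\ge2$. Let $[c,d]$ be an interval with $\inf_{c\le x\le d}f_Z(x)>0$. Then $\sup_{c\le x\le d}|\widehat g(x)-g(x)|\to0$ almost surely. *)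

theory Defs
  imports "HOL-Probability.Probability" "HOL-Library.Landau_Symbols"
begin

definition emp_cdf :: "(nat \<Rightarrow> real) \<Rightarrow> nat \<Rightarrow> real \<Rightarrow> real" where
  "emp_cdf Y n y = (\<Sum>i=1..n. if Y i \<le> y then 1 else 0) / real n"

definition emp_quantile :: "(nat \<Rightarrow> real) \<Rightarrow> nat \<Rightarrow> real \<Rightarrow> real" where
  "emp_quantile Y n p = Inf {y. emp_cdf Y n y \<ge> p}"

definition g_hat :: "(nat \<Rightarrow> real) \<Rightarrow> (real \<Rightarrow> real) \<Rightarrow> nat \<Rightarrow> real \<Rightarrow> real" where
  "g_hat Y FZ n x = emp_quantile Y n (FZ x)"

end

theory Submission
  imports Defs
begin

text \<open>
  The process \<open>Z\<close> is a causal filter of an i.i.d. sequence, that is, a function of the shifted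
  innovation path. For a bounded Lipschitz \<open>\<phi>\<close> the averages of \<open>\<phi>(Z\<^sub>k)\<close> converge almost surely
  to \<open>E \<phi>(Z\<^sub>0)\<close>: the filter truncated at lag \<open>m\<close> is \<open>m\<close>-dependent, so it splits into \<open>m\<close>
  i.i.d. subsequences that obey Hoeffding's inequality and, by Borel--Cantelli, the strong law,
  while the maximal ergodic inequality for the shift controls the truncation error uniformly in
  time. Squeezing indicators between Lipschitz ramps then gives almost sure convergence of the
  empirical distribution function at every continuity point of \<open>F\<^sub>Z\<close>, simultaneously at all
  rationals. As \<open>g\<close> is strictly increasing, the empirical quantile of the \<open>Y\<^sub>i\<close> at level \<open>F\<^sub>Z(x)\<close>
  is trapped between \<open>g(l)\<close> and \<open>g(u)\<close> for rationals \<open>l < x < u\<close> as soon as \<open>F\<^sub>Z\<close> increases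
  strictly through \<open>x\<close>, which \<open>f\<^sub>Z(x) > 0\<close> guarantees; this is (i). On \<open>[c, d]\<close> the estimates
  are monotone in \<open>x\<close> and converge pointwise to the continuous \<open>g\<close>, hence uniformly; this is (ii).
\<close>

section \<open>The maximal ergodic inequality\<close>

definition birkhoff_sum :: "('a \<Rightarrow> 'a) \<Rightarrow> ('a \<Rightarrow> real) \<Rightarrow> nat \<Rightarrow> 'a \<Rightarrow> real" where
  "birkhoff_sum T f n x = (\<Sum>k<n. f ((T ^^ k) x))"

definition max_birkhoff_sum :: "('a \<Rightarrow> 'a) \<Rightarrow> ('a \<Rightarrow> real) \<Rightarrow> nat \<Rightarrow> 'a \<Rightarrow> real" where
  "max_birkhoff_sum T f N x = Max ((\<lambda>n. birkhoff_sum T f n x) ` {..N})"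

lemma measurable_funpow: "T \<in> measurable M M \<Longrightarrow> (T ^^ k) \<in> measurable M M"
  by (induction k) (auto intro: measurable_comp)

lemma birkhoff_sum_measurable[measurable]:
  assumes [measurable]: "T \<in> measurable M M" "f \<in> borel_measurable M"
  shows "birkhoff_sum T f n \<in> borel_measurable M"
  using measurable_funpow[OF assms(1)] unfolding birkhoff_sum_def by measurable

lemma max_birkhoff_sum_measurable[measurable]:
  assumes [measurable]: "T \<in> measurable M M" "f \<in> borel_measurable M"
  shows "max_birkhoff_sum T f N \<in> borel_measurable M"
  unfolding max_birkhoff_sum_def by measurable

lemma birkhoff_sum_0[simp]: "birkhoff_sum T f 0 x = 0"
  by (simp add: birkhoff_sum_def)

lemma birkhoff_sum_Suc: "birkhoff_sum T f (Suc n) x = f x + birkhoff_sum T f n (T x)"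
  unfolding birkhoff_sum_def
  by (subst sum.lessThan_Suc_shift) (simp add: funpow_Suc_right del: funpow.simps)

lemma abs_birkhoff_sum_le:
  assumes "\<And>y. \<bar>f y\<bar> \<le> B"
  shows "\<bar>birkhoff_sum T f n x\<bar> \<le> real n * B"
proof -
  have "\<bar>birkhoff_sum T f n x\<bar> \<le> (\<Sum>k<n. \<bar>f ((T ^^ k) x)\<bar>)"
    unfolding birkhoff_sum_def by (rule sum_abs)
  also have "\<dots> \<le> (\<Sum>k<n. B)"
    by (intro sum_mono assms)
  finally show ?thesis by simp
qed

lemma birkhoff_sum_le_max: "n \<le> N \<Longrightarrow> birkhoff_sum T f n x \<le> max_birkhoff_sum T f N x"
  unfolding max_birkhoff_sum_def by (rule Max_ge) auto

lemma max_birkhoff_sum_attained: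
  obtains n where "n \<le> N" "max_birkhoff_sum T f N x = birkhoff_sum T f n x"
proof -
  have "max_birkhoff_sum T f N x \<in> (\<lambda>n. birkhoff_sum T f n x) ` {..N}"
    unfolding max_birkhoff_sum_def by (rule Max_in) auto
  then show ?thesis using that by auto
qed

lemma max_birkhoff_sum_nonneg: "0 \<le> max_birkhoff_sum T f N x"
  using birkhoff_sum_le_max[where n=0 and N=N and T=T and f=f and x=x] by simp

lemma abs_max_birkhoff_sum_le:
  assumes f_bounded: "\<And>y. \<bar>f y\<bar> \<le> B"
  shows "\<bar>max_birkhoff_sum T f N x\<bar> \<le> real N * B"
proof -
  obtain n where n: "n \<le> N" "max_birkhoff_sum T f N x = birkhoff_sum T f n x"
    by (rule max_birkhoff_sum_attained)
  have "0 \<le> B"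
    using f_bounded[of x] by linarith
  then have "real n * B \<le> real N * B"
    using n(1) by (intro mult_right_mono) auto
  moreover have "\<bar>birkhoff_sum T f n x\<bar> \<le> real n * B"
    by (rule abs_birkhoff_sum_le) (rule f_bounded)
  ultimately show ?thesis
    using n(2) by linarith
qed

lemma max_birkhoff_sum_le_step:
  assumes "\<exists>n\<in>{1..N}. birkhoff_sum T f n x > 0"
  shows "max_birkhoff_sum T f N x \<le> f x + max_birkhoff_sum T f N (T x)"
proof -
  obtain n where n: "n \<le> N" "max_birkhoff_sum T f N x = birkhoff_sum T f n x"
    by (rule max_birkhoff_sum_attained)
  obtain m where "m \<le> N" "birkhoff_sum T f m x > 0"
    using assms by auto
  then have "max_birkhoff_sum T f N x > 0"
    using birkhoff_sum_le_max[where n=m and N=N and T=T and f=f and x=x] by linarith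
  then obtain n' where "n = Suc n'"
    using n by (cases n) auto
  then show ?thesis
    using n birkhoff_sum_le_max[where n=n' and N=N and T=T and f=f and x="T x"] by (simp add: birkhoff_sum_Suc)
qed

lemma max_birkhoff_sum_eq_0:
  assumes "\<not> (\<exists>n\<in>{1..N}. birkhoff_sum T f n x > 0)"
  shows "max_birkhoff_sum T f N x = 0"
proof -
  obtain n where n: "n \<le> N" "max_birkhoff_sum T f N x = birkhoff_sum T f n x"
    by (rule max_birkhoff_sum_attained)
  have "\<not> birkhoff_sum T f n x > 0"
    using assms n(1) by (cases n) auto
  then show ?thesis
    using n(2) max_birkhoff_sum_nonneg[where T=T and f=f and N=N and x=x] by linarith
qed

text \<open>Garsia's proof: on the set \<open>A\<close> where some partial sum is positive, the running maximum
  satisfies \<open>S \<le> f + S \<circ> T\<close>, outside \<open>A\<close> it vanishes; integrating and using invariance of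
  \<open>S \<circ> T\<close> leaves \<open>0 \<le> \<integral>\<^sub>A f\<close>.\<close>

lemma maximal_ergodic_lemma:
  fixes f :: "'a \<Rightarrow> real" and N :: nat
  assumes "prob_space P" and T[measurable]: "T \<in> measurable P P" and T_preserving: "distr P P T = P"
    and f[measurable]: "f \<in> borel_measurable P" and f_bounded: "\<And>x. \<bar>f x\<bar> \<le> B"
  defines "A \<equiv> {x\<in>space P. \<exists>n\<in>{1..N}. birkhoff_sum T f n x > 0}"
  shows "0 \<le> integral\<^sup>L P (\<lambda>x. f x * indicator A x)"
proof -
  interpret prob_space P by fact
  let ?S = "max_birkhoff_sum T f N"
  have [measurable]: "A \<in> sets P"
    unfolding A_def by measurable
  have S_bound: "\<bar>?S x\<bar> \<le> real N * B" for x
    by (rule abs_max_birkhoff_sum_le[OF f_bounded])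
  have B_nonneg: "0 \<le> B"
    using f_bounded[of undefined] by linarith
  have int_fA: "integrable P (\<lambda>x. f x * indicator A x)"
    by (rule integrable_const_bound[where B=B]) (auto simp: indicator_def f_bounded B_nonneg)
  have int_STA: "integrable P (\<lambda>x. ?S (T x) * indicator A x)"
    by (rule integrable_const_bound[where B="real N * B"]) (auto simp: indicator_def S_bound B_nonneg)
  have int_ST: "integrable P (\<lambda>x. ?S (T x))"
    by (rule integrable_const_bound[where B="real N * B"]) (auto simp: S_bound)
  have int_SA: "integrable P (\<lambda>x. ?S x * indicator A x)"
    by (rule integrable_const_bound[where B="real N * B"]) (auto simp: indicator_def S_bound B_nonneg)
  have "integral\<^sup>L P ?S = integral\<^sup>L P (\<lambda>x. ?S x * indicator A x)"
    by (rule Bochner_Integration.integral_cong) (auto simp: indicator_def A_def max_birkhoff_sum_eq_0)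
  also have "\<dots> \<le> integral\<^sup>L P (\<lambda>x. f x * indicator A x + ?S (T x) * indicator A x)"
    by (rule Bochner_Integration.integral_mono[OF int_SA Bochner_Integration.integrable_add[OF int_fA int_STA]])
       (auto simp: indicator_def A_def max_birkhoff_sum_le_step)
  also have "\<dots> \<le> integral\<^sup>L P (\<lambda>x. f x * indicator A x) + integral\<^sup>L P (\<lambda>x. ?S (T x))"
    by (subst Bochner_Integration.integral_add[OF int_fA int_STA], rule add_left_mono,
        rule Bochner_Integration.integral_mono[OF int_STA int_ST]) (auto simp: indicator_def max_birkhoff_sum_nonneg)
  also have "integral\<^sup>L P (\<lambda>x. ?S (T x)) = integral\<^sup>L P ?S"
    using integral_distr[of T P P ?S] by (simp add: T_preserving)
  finally show ?thesis by simp
qed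

lemma birkhoff_sum_minus_const: "birkhoff_sum T (\<lambda>x. g x - l) n x = birkhoff_sum T g n x - real n * l"
  by (simp add: birkhoff_sum_def sum_subtractf)

lemma maximal_ergodic_inequality_finite:
  fixes g :: "'a \<Rightarrow> real" and N :: nat
  assumes P: "prob_space P" and T[measurable]: "T \<in> measurable P P" and T_preserving: "distr P P T = P"
    and g[measurable]: "g \<in> borel_measurable P" and g01: "\<And>x. 0 \<le> g x \<and> g x \<le> 1"
    and l: "l > 0"
  defines "A \<equiv> {x\<in>space P. \<exists>n\<in>{1..N}. birkhoff_sum T g n x > real n * l}"
  shows "l * measure P A \<le> integral\<^sup>L P g"
proof -
  interpret prob_space P by (rule P)
  have [measurable]: "A \<in> sets P"
    unfolding A_def by measurable
  have int_gA: "integrable P (\<lambda>x. g x * indicator A x)"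
    using g01 by (intro integrable_const_bound[where B=1]) (auto simp: indicator_def)
  have int_lA: "integrable P (\<lambda>x. l * indicator A x :: real)"
    by (intro integrable_mult_right integrable_real_indicator) (auto simp: emeasure_eq_measure)
  have A_eq: "A = {x\<in>space P. \<exists>n\<in>{1..N}. birkhoff_sum T (\<lambda>x. g x - l) n x > 0}"
    by (simp add: A_def birkhoff_sum_minus_const)
  have "\<bar>g x - l\<bar> \<le> 1 + l" for x
    using g01[of x] l by auto
  then have "0 \<le> integral\<^sup>L P (\<lambda>x. (g x - l) * indicator A x)"
    unfolding A_eq by (intro maximal_ergodic_lemma[OF P T T_preserving]) auto
  also have "\<dots> = integral\<^sup>L P (\<lambda>x. g x * indicator A x) - l * measure P A"
    by (simp add: left_diff_distrib Bochner_Integration.integral_diff[OF int_gA int_lA])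
  also have "integral\<^sup>L P (\<lambda>x. g x * indicator A x) \<le> integral\<^sup>L P g"
    using g01 by (intro Bochner_Integration.integral_mono[OF int_gA]
        integrable_const_bound[where B=1]) (auto simp: indicator_def)
  finally show ?thesis
    by simp
qed

lemma maximal_ergodic_inequality:
  fixes g :: "'a \<Rightarrow> real"
  assumes P: "prob_space P" and T[measurable]: "T \<in> measurable P P" and T_preserving: "distr P P T = P"
    and g[measurable]: "g \<in> borel_measurable P" and g01: "\<And>x. 0 \<le> g x \<and> g x \<le> 1"
    and l: "l > 0"
  shows "measure P {x\<in>space P. \<exists>n\<ge>1. birkhoff_sum T g n x > real n * l} \<le> integral\<^sup>L P g / l"
proof -
  interpret prob_space P by (rule P)
  define A where "A N = {x\<in>space P. \<exists>n\<in>{1..N}. birkhoff_sum T g n x > real n * l}" for N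
  have [measurable]: "A N \<in> sets P" for N
    unfolding A_def by measurable
  have "incseq A"
    unfolding incseq_def A_def by (auto 0 3 intro: bexI)
  then have lim: "(\<lambda>N. measure P (A N)) \<longlonglongrightarrow> measure P (\<Union>N. A N)"
    by (intro finite_Lim_measure_incseq) auto
  have "measure P (A N) \<le> integral\<^sup>L P g / l" for N
    using maximal_ergodic_inequality_finite[OF P T T_preserving g g01 l, of N] l
    by (simp add: A_def field_simps mult.commute)
  then have "measure P (\<Union>N. A N) \<le> integral\<^sup>L P g / l"
    by (intro LIMSEQ_le_const2[OF lim]) blast
  moreover have "{x\<in>space P. \<exists>n\<ge>1. birkhoff_sum T g n x > real n * l} = (\<Union>N. A N)"
    unfolding A_def by (auto simp: Bex_def)
  ultimately show ?thesis
    by simp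
qed

lemma AE_tendsto_if_AE_eventually_close:
  fixes X :: "nat \<Rightarrow> 'a \<Rightarrow> real"
  assumes close: "\<And>e. e > 0 \<Longrightarrow> AE \<omega> in M. eventually (\<lambda>n. \<bar>X n \<omega> - L\<bar> \<le> e) sequentially"
  shows "AE \<omega> in M. (\<lambda>n. X n \<omega>) \<longlonglongrightarrow> L"
proof -
  have "AE \<omega> in M. \<forall>j::nat. eventually (\<lambda>n. \<bar>X n \<omega> - L\<bar> \<le> 1 / Suc j) sequentially"
    unfolding AE_all_countable by (intro allI close) simp
  then show ?thesis
  proof (rule AE_mp, intro AE_I2 impI)
    fix \<omega> assume ev: "\<forall>j::nat. eventually (\<lambda>n. \<bar>X n \<omega> - L\<bar> \<le> 1 / Suc j) sequentially"
    show "(\<lambda>n. X n \<omega>) \<longlonglongrightarrow> L"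
      unfolding tendsto_iff dist_real_def
    proof (intro allI impI)
      fix r :: real assume "r > 0"
      then obtain j where j: "1 / Suc j < r"
        using reals_Archimedean by (auto simp: inverse_eq_divide)
      show "eventually (\<lambda>n. \<bar>X n \<omega> - L\<bar> < r) sequentially"
        using ev[rule_format, of j] by (rule eventually_mono) (use j in linarith)
    qed
  qed
qed

lemma (in prob_space) AE_if_small_exceptional_sets:
  assumes small: "\<And>r. r > 0 \<Longrightarrow> \<exists>N\<in>sets M. prob N \<le> r \<and> (AE \<omega> in M. \<omega> \<notin> N \<longrightarrow> P \<omega>)"
  shows "AE \<omega> in M. P \<omega>"
proof -
  have "\<exists>N\<in>sets M. prob N \<le> 1 / Suc j \<and> (AE \<omega> in M. \<omega> \<notin> N \<longrightarrow> P \<omega>)" for j :: nat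
    by (rule small) simp
  then obtain N where N: "\<And>j. N j \<in> sets M" "\<And>j. prob (N j) \<le> 1 / Suc j"
    and good: "\<And>j. AE \<omega> in M. \<omega> \<notin> N j \<longrightarrow> P \<omega>"
    by metis
  have bound: "prob (\<Inter>j. N j) \<le> 1 / Suc j" for j
    by (rule order.trans[OF finite_measure_mono N(2)]) (auto simp: N(1))
  have "prob (\<Inter>j. N j) \<le> 0"
  proof (rule field_le_epsilon)
    fix r :: real assume "r > 0"
    then obtain j where "1 / Suc j < r"
      using reals_Archimedean by (auto simp: inverse_eq_divide)
    then show "prob (\<Inter>j. N j) \<le> 0 + r"
      using bound[of j] by linarith
  qed
  then have "prob (\<Inter>j. N j) = 0"
    using measure_nonneg[of M "\<Inter>j. N j"] by linarith
  then have "(\<Inter>j. N j) \<in> null_sets M"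
    using N(1) by (auto simp: emeasure_eq_measure null_sets_def)
  then have "AE \<omega> in M. \<omega> \<notin> (\<Inter>j. N j)"
    by (rule AE_not_in)
  moreover have "AE \<omega> in M. \<forall>j. \<omega> \<notin> N j \<longrightarrow> P \<omega>"
    unfolding AE_all_countable using good by blast
  ultimately show ?thesis
    by eventually_elim auto
qed

section \<open>Shifts of i.i.d. sequences\<close>

definition shift_left :: "(int \<Rightarrow> 'a) \<Rightarrow> int \<Rightarrow> 'a" where
  "shift_left e = (\<lambda>j. e (j + 1))"

lemma funpow_shift_left: "(shift_left ^^ s) e = (\<lambda>j. e (j + int s))"
  by (induction s arbitrary: e) (auto simp: shift_left_def algebra_simps)

lemma measurable_shift_left[measurable]:
  "shift_left \<in> measurable (PiM UNIV (\<lambda>_. N)) (PiM UNIV (\<lambda>_. N))"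
  unfolding shift_left_def by (rule measurable_PiM_single') (auto simp: space_PiM)

lemma measurable_funpow_shift_left[measurable]:
  "(shift_left ^^ s) \<in> measurable (PiM UNIV (\<lambda>_. N)) (PiM UNIV (\<lambda>_. N))"
  by (rule measurable_funpow) (rule measurable_shift_left)

locale iid_sequence = prob_space M
  for M :: "'w measure" +
  fixes eps :: "int \<Rightarrow> 'w \<Rightarrow> real" and D :: "real measure"
  assumes indep: "indep_vars (\<lambda>_. borel) eps UNIV"
    and distr_eps: "\<And>i. distr M borel (eps i) = D"
begin

lemma measurable_eps[measurable]: "eps i \<in> borel_measurable M"
  using indep unfolding indep_vars_def by auto

definition path :: "'w \<Rightarrow> int \<Rightarrow> real" where
  "path \<omega> = (\<lambda>j. eps j \<omega>)"

abbreviation Seq :: "(int \<Rightarrow> real) measure" where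
  "Seq \<equiv> PiM UNIV (\<lambda>_. borel)"

definition law :: "(int \<Rightarrow> real) measure" where
  "law = distr M Seq path"

lemma measurable_path[measurable]: "path \<in> measurable M Seq"
  unfolding path_def by (rule measurable_PiM_single') (auto simp: space_PiM)

lemma prob_cylinder:
  assumes J: "finite J" and A: "\<And>j. j \<in> J \<Longrightarrow> A j \<in> sets borel"
  shows "prob {\<omega>\<in>space M. \<forall>j\<in>J. eps (j + c) \<omega> \<in> A j} = (\<Prod>j\<in>J. measure D (A j))"
proof (cases "J = {}")
  case True
  then show ?thesis by (simp add: prob_space)
next
  case False
  have inj: "inj_on (\<lambda>j. j + c) J"
    by (auto simp: inj_on_def)
  have "{\<omega>\<in>space M. \<forall>j\<in>J. eps (j + c) \<omega> \<in> A j} = (\<Inter>i\<in>(\<lambda>j. j + c) ` J. eps i -` A (i - c) \<inter> space M)"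
    using False by auto
  also have "prob \<dots> = (\<Prod>i\<in>(\<lambda>j. j + c) ` J. prob (eps i -` A (i - c) \<inter> space M))"
    by (rule indep_varsD[OF indep]) (use False J A in auto)
  also have "\<dots> = (\<Prod>j\<in>J. prob (eps (j + c) -` A j \<inter> space M))"
    by (simp add: prod.reindex[OF inj])
  also have "\<dots> = (\<Prod>j\<in>J. measure D (A j))"
  proof (rule prod.cong[OF refl])
    fix j assume "j \<in> J"
    then show "prob (eps (j + c) -` A j \<inter> space M) = measure D (A j)"
      using A by (simp add: measure_distr flip: distr_eps[of "j + c"])
  qed
  finally show ?thesis .
qed

lemma measurable_shifted_path[measurable]: "(\<lambda>\<omega> j. eps (j + c) \<omega>) \<in> measurable M Seq"
  by (rule measurable_PiM_single') (auto simp: space_PiM)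

lemma distr_shifted_path: "distr M Seq (\<lambda>\<omega> j. eps (j + c) \<omega>) = law"
  unfolding law_def
proof (rule measure_eqI_PiM_infinite)
  show "finite_measure (distr M Seq (\<lambda>\<omega> j. eps (j + c) \<omega>))"
    by (intro prob_space.finite_measure prob_space_distr) measurable
  fix J :: "int set" and A :: "int \<Rightarrow> real set" assume J: "finite J" "J \<subseteq> UNIV" and A: "\<And>i. i \<in> J \<Longrightarrow> A i \<in> sets borel"
  have cyl: "prod_emb UNIV (\<lambda>_. borel) J (Pi\<^sub>E J A) \<in> sets Seq"
    using J A by (intro sets_PiM_I) auto
  have "emeasure (distr M Seq (\<lambda>\<omega> j. eps (j + c) \<omega>)) (prod_emb UNIV (\<lambda>_. borel) J (Pi\<^sub>E J A))
     = emeasure M {\<omega>\<in>space M. \<forall>j\<in>J. eps (j + c) \<omega> \<in> A j}"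
    using cyl by (subst emeasure_distr) (auto simp: prod_emb_iff intro!: arg_cong[where f="emeasure M"])
  also have "\<dots> = emeasure M {\<omega>\<in>space M. \<forall>j\<in>J. eps (j + 0) \<omega> \<in> A j}"
    using prob_cylinder[OF J(1) A, where c=c] prob_cylinder[OF J(1) A, where c=0] by (simp add: emeasure_eq_measure)
  also have "\<dots> = emeasure (distr M Seq path) (prod_emb UNIV (\<lambda>_. borel) J (Pi\<^sub>E J A))"
    using cyl by (subst emeasure_distr) (auto simp: prod_emb_iff path_def intro!: arg_cong[where f="emeasure M"])
  finally show "emeasure (distr M Seq (\<lambda>\<omega> j. eps (j + c) \<omega>)) (prod_emb UNIV (\<lambda>_. borel) J (Pi\<^sub>E J A)) =
      emeasure (distr M Seq path) (prod_emb UNIV (\<lambda>_. borel) J (Pi\<^sub>E J A))" .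
qed simp_all

lemma distr_funpow_shift_left_path: "distr M Seq (\<lambda>\<omega>. (shift_left ^^ s) (path \<omega>)) = law"
  using distr_shifted_path[of "int s"] by (simp add: funpow_shift_left path_def)

lemma prob_space_law: "prob_space law"
  unfolding law_def by (rule prob_space_distr) measurable

lemma sets_law[simp, measurable_cong]: "sets law = sets Seq"
  by (simp add: law_def)

lemma space_law[simp]: "space law = space Seq"
  by (simp add: law_def)

lemma shift_left_preserves_law: "distr law law shift_left = law"
proof -
  have "distr law law shift_left = distr law Seq shift_left"
    by (rule distr_cong) auto
  also have "\<dots> = distr M Seq (\<lambda>\<omega>. (shift_left ^^ 1) (path \<omega>))"
    unfolding law_def by (subst distr_distr) (auto simp: comp_def)
  finally show ?thesis
    using distr_funpow_shift_left_path[of 1] by simp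
qed

lemma distr_comp_funpow_shift_left_path:
  assumes [measurable]: "H \<in> borel_measurable Seq"
  shows "distr M borel (\<lambda>\<omega>. H ((shift_left ^^ s) (path \<omega>))) = distr M borel (\<lambda>\<omega>. H (path \<omega>))"
proof -
  have "distr M borel (\<lambda>\<omega>. H ((shift_left ^^ s) (path \<omega>)))
      = distr (distr M Seq (\<lambda>\<omega>. (shift_left ^^ s) (path \<omega>))) borel H"
    by (subst distr_distr) (auto simp: comp_def)
  also have "\<dots> = distr (distr M Seq path) borel H"
    by (simp add: distr_funpow_shift_left_path law_def)
  also have "\<dots> = distr M borel (\<lambda>\<omega>. H (path \<omega>))"
    by (subst distr_distr) (auto simp: comp_def)
  finally show ?thesis .
qed

lemma maximal_inequality_path:
  assumes [measurable]: "v \<in> borel_measurable Seq" and v01: "\<And>e. 0 \<le> v e \<and> v e \<le> 1" and l: "l > 0"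
  shows "prob {\<omega>\<in>space M. \<exists>n\<ge>1. (\<Sum>k\<in>{1..n}. v ((shift_left ^^ k) (path \<omega>))) > real n * l}
           \<le> expectation (\<lambda>\<omega>. v (path \<omega>)) / l"
proof -
  let ?E = "{e\<in>space Seq. \<exists>n\<ge>1. birkhoff_sum shift_left v n e > real n * l}"
  have [measurable]: "?E \<in> sets Seq"
    by measurable
  have sum_eq: "birkhoff_sum shift_left v n (shift_left e) = (\<Sum>k\<in>{1..n}. v ((shift_left ^^ k) e))" for n e
    unfolding birkhoff_sum_def
    by (induction n) (simp_all add: funpow_Suc_right del: funpow.simps)
  have [measurable]: "(\<lambda>\<omega>. shift_left (path \<omega>)) \<in> measurable M Seq"
    by measurable
  have "prob {\<omega>\<in>space M. \<exists>n\<ge>1. (\<Sum>k\<in>{1..n}. v ((shift_left ^^ k) (path \<omega>))) > real n * l}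
      = prob ((\<lambda>\<omega>. shift_left (path \<omega>)) -` ?E \<inter> space M)"
    using measurable_space[OF measurable_path] by (intro arg_cong[where f=prob]) (auto simp: sum_eq space_PiM)
  also have "\<dots> = measure (distr M Seq (\<lambda>\<omega>. shift_left (path \<omega>))) ?E"
    by (rule measure_distr[symmetric]) measurable
  also have "\<dots> = measure law ?E"
    using distr_funpow_shift_left_path[of 1] by simp
  also have "\<dots> \<le> integral\<^sup>L law v / l"
    using maximal_ergodic_inequality[OF prob_space_law _ shift_left_preserves_law _ v01 l] by simp
  also have "integral\<^sup>L law v = expectation (\<lambda>\<omega>. v (path \<omega>))"
    unfolding law_def by (rule integral_distr) auto
  finally show ?thesis .
qed

end

lemma (in prob_space) iid_sequence_density:
  assumes "indep_vars (\<lambda>_. borel) eps UNIV" and "\<And>i. distributed M lborel (eps i) f"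
  shows "iid_sequence M eps (density lborel f)"
proof
  show "distr M borel (eps i) = density lborel f" for i
    using assms(2)[of i] by (simp add: distributed_def cong: distr_cong)
qed (fact assms(1))

definition causal_filter :: "(nat \<Rightarrow> real) \<Rightarrow> int \<Rightarrow> (int \<Rightarrow> real) \<Rightarrow> real" where
  "causal_filter a k e = (\<Sum>i. a i * e (k - int i))"

definition causal_filter_trunc :: "(nat \<Rightarrow> real) \<Rightarrow> nat \<Rightarrow> int \<Rightarrow> (int \<Rightarrow> real) \<Rightarrow> real" where
  "causal_filter_trunc a m k e = (\<Sum>i<m. a i * e (k - int i))"

lemma causal_filter_funpow_shift_left:
  "causal_filter a k ((shift_left ^^ s) e) = causal_filter a (k + int s) e"
  by (simp add: causal_filter_def funpow_shift_left algebra_simps)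

lemma causal_filter_trunc_funpow_shift_left:
  "causal_filter_trunc a m k ((shift_left ^^ s) e) = causal_filter_trunc a m (k + int s) e"
  by (simp add: causal_filter_trunc_def funpow_shift_left algebra_simps)

lemma measurable_causal_filter[measurable]:
  "causal_filter a k \<in> borel_measurable (PiM UNIV (\<lambda>_. borel))"
  unfolding causal_filter_def by measurable

lemma measurable_causal_filter_trunc[measurable]:
  "causal_filter_trunc a m k \<in> borel_measurable (PiM UNIV (\<lambda>_. borel))"
  unfolding causal_filter_trunc_def by measurable

lemma causal_filter_trunc_tendsto:
  "summable (\<lambda>i. a i * e (k - int i)) \<Longrightarrow> (\<lambda>m. causal_filter_trunc a m k e) \<longlonglongrightarrow> causal_filter a k e"
  unfolding causal_filter_trunc_def causal_filter_def by (rule summable_LIMSEQ)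

section \<open>Strong law of large numbers for causal filters\<close>

lemma eq_if_mod_eq_and_dist_less:
  fixes k k' m :: nat
  assumes "k mod m = k' mod m" and "\<bar>int k - int k'\<bar> < int m"
  shows "k = k'"
proof (rule ccontr)
  assume "k \<noteq> k'"
  moreover have "int m dvd int k - int k'"
    using assms(1) by (metis mod_eq_dvd_iff of_nat_mod)
  ultimately show False
    using dvd_imp_le_int[of "int k - int k'" "int m"] assms(2) by auto
qed

lemma abs_sum_deviation_le_residue_classes:
  fixes x :: "nat \<Rightarrow> real"
  assumes "finite I" and "m \<ge> 1"
  shows "\<bar>(\<Sum>k\<in>I. x k) - real (card I) * \<mu>\<bar>
    \<le> (\<Sum>r<m. \<bar>(\<Sum>k\<in>{k\<in>I. k mod m = r}. x k) - real (card {k\<in>I. k mod m = r}) * \<mu>\<bar>)"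
proof -
  have group: "(\<Sum>k\<in>I. y k) = (\<Sum>r<m. \<Sum>k\<in>{k\<in>I. k mod m = r}. y k)" for y :: "nat \<Rightarrow> real"
    using assms by (subst sum.group[symmetric, of I "{..<m}" "\<lambda>k. k mod m"]) auto
  have "(\<Sum>k\<in>I. x k) - real (card I) * \<mu> = (\<Sum>k\<in>I. x k - \<mu>)"
    by (simp add: sum_subtractf)
  also have "\<dots> = (\<Sum>r<m. \<Sum>k\<in>{k\<in>I. k mod m = r}. x k - \<mu>)"
    by (rule group)
  also have "\<dots> = (\<Sum>r<m. (\<Sum>k\<in>{k\<in>I. k mod m = r}. x k) - real (card {k\<in>I. k mod m = r}) * \<mu>)"
    by (simp add: sum_subtractf)
  finally show ?thesis
    by (simp only: sum_abs)
qed

context iid_sequence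
begin

text \<open>Times in one residue class modulo \<open>m\<close> are at least \<open>m\<close> apart, so there the truncated
  filter reads disjoint blocks of innovations.\<close>

lemma indep_vars_causal_filter_trunc:
  assumes [measurable]: "\<phi> \<in> borel_measurable borel"
    and K: "\<And>k k'. k \<in> K \<Longrightarrow> k' \<in> K \<Longrightarrow> k mod m = k' mod m"
  shows "indep_vars (\<lambda>_. borel) (\<lambda>k \<omega>. \<phi> (causal_filter_trunc a m (int k) (path \<omega>))) K"
proof -
  define B where "B k = {int k - int i | i. i < m}" for k :: nat
  define Y where "Y k e = \<phi> (\<Sum>i<m. a i * e (int k - int i))" for k :: nat and e :: "int \<Rightarrow> real"
  have "disjoint_family_on B K"
  proof (unfold disjoint_family_on_def, intro ballI impI)
    fix k k' assume k: "k \<in> K" "k' \<in> K" "k \<noteq> k'"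
    show "B k \<inter> B k' = {}"
    proof (rule ccontr)
      assume "B k \<inter> B k' \<noteq> {}"
      then obtain i i' where "i < m" "i' < m" "int k - int i = int k' - int i'"
        by (auto simp: B_def)
      then have "\<bar>int k - int k'\<bar> < int m"
        by linarith
      then have "k = k'"
        by (rule eq_if_mod_eq_and_dist_less[OF K[OF k(1,2)]])
      with k(3) show False ..
    qed
  qed
  then have "indep_vars (\<lambda>k. PiM (B k) (\<lambda>_. borel)) (\<lambda>k \<omega>. restrict (\<lambda>i. eps i \<omega>) (B k)) K"
    by (intro indep_vars_restrict[OF indep]) auto
  moreover have "Y k \<in> borel_measurable (PiM (B k) (\<lambda>_. borel))" for k
    unfolding Y_def
    by (intro measurable_compose[OF _ assms(1)] borel_measurable_sum borel_measurable_times
        borel_measurable_const measurable_component_singleton) (auto simp: B_def)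
  ultimately have "indep_vars (\<lambda>_. borel) (\<lambda>k \<omega>. Y k (restrict (\<lambda>i. eps i \<omega>) (B k))) K"
    by (rule indep_vars_compose2)
  also have "?this \<longleftrightarrow> ?thesis"
    by (intro indep_vars_cong)
       (auto simp: Y_def causal_filter_trunc_def path_def B_def fun_eq_iff intro!: arg_cong[where f=\<phi>] sum.cong)
  finally show ?thesis .
qed

lemma distr_causal_filter_trunc:
  assumes [measurable]: "\<phi> \<in> borel_measurable borel"
  shows "distr M borel (\<lambda>\<omega>. \<phi> (causal_filter_trunc a m (int k) (path \<omega>)))
       = distr M borel (\<lambda>\<omega>. \<phi> (causal_filter_trunc a m 0 (path \<omega>)))"
  using distr_comp_funpow_shift_left_path[of "\<lambda>e. \<phi> (causal_filter_trunc a m 0 e)" k]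
  by (simp add: causal_filter_trunc_funpow_shift_left)

lemma hoeffding_causal_filter_trunc:
  fixes \<phi> :: "real \<Rightarrow> real" and a :: "nat \<Rightarrow> real" and m :: nat
  assumes [measurable]: "\<phi> \<in> borel_measurable borel" and phi01: "\<And>t. 0 \<le> \<phi> t \<and> \<phi> t \<le> 1"
    and K: "\<And>k k'. k \<in> K \<Longrightarrow> k' \<in> K \<Longrightarrow> k mod m = k' mod m"
    and "finite K" "K \<noteq> {}" "s \<ge> 0"
  defines "X \<equiv> \<lambda>k \<omega>. \<phi> (causal_filter_trunc a m (int k) (path \<omega>))"
  shows "prob {\<omega>\<in>space M. \<bar>(\<Sum>k\<in>K. X k \<omega>) - real (card K) * expectation (X 0)\<bar> \<ge> s}
     \<le> 2 * exp (-2 * s\<^sup>2 / real (card K))"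
proof -
  interpret Hoeffding_ineq_iid M K X "X 0" 0 1 "expectation (X 0)"
  proof unfold_locales
    show "finite K"
      by fact
    show "indep_vars (\<lambda>_. borel) X K"
      unfolding X_def by (rule indep_vars_causal_filter_trunc[OF assms(1) K])
    show "distr M borel (X i) = distr M borel (X 0)" if "i \<in> K" for i
      unfolding X_def of_nat_0 by (rule distr_causal_filter_trunc[OF assms(1)])
    show "random_variable borel (X 0)"
      unfolding X_def by measurable
    show "AE x in M. X 0 x \<in> {0..1}"
      using phi01 by (auto simp: X_def)
  qed (rule reflexive)
  show ?thesis
    using Hoeffding_ineq_abs_ge[of s] assms(4-) by simp
qed

lemma prob_residue_class_deviation:
  fixes \<phi> :: "real \<Rightarrow> real" and a :: "nat \<Rightarrow> real" and m n :: nat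
  assumes [measurable]: "\<phi> \<in> borel_measurable borel" and phi01: "\<And>t. 0 \<le> \<phi> t \<and> \<phi> t \<le> 1"
    and "m \<ge> 1" "t > 0" "n \<ge> 1"
    and K: "K \<subseteq> {1..n}" "\<And>k k'. k \<in> K \<Longrightarrow> k' \<in> K \<Longrightarrow> k mod m = k' mod m"
  defines "X \<equiv> \<lambda>k \<omega>. \<phi> (causal_filter_trunc a m (int k) (path \<omega>))"
  shows "prob {\<omega>\<in>space M. real n * t / real m \<le> \<bar>(\<Sum>k\<in>K. X k \<omega>) - real (card K) * expectation (X 0)\<bar>}
     \<le> 2 * exp (-2 * t\<^sup>2 / (real m)\<^sup>2) ^ n"
proof (cases "K = {}")
  case True
  have "real n * t / real m > 0"
    using assms(3-5) by simp
  with True show ?thesis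
    by (simp add: not_le)
next
  case False
  have "finite K"
    using K(1) finite_subset by blast
  then have card: "0 < real (card K)" "real (card K) \<le> real n"
    using False card_mono[OF _ K(1)] by (auto simp: card_gt_0_iff)
  have "prob {\<omega>\<in>space M. real n * t / real m \<le> \<bar>(\<Sum>k\<in>K. X k \<omega>) - real (card K) * expectation (X 0)\<bar>}
      \<le> 2 * exp (-2 * (real n * t / real m)\<^sup>2 / real (card K))"
    unfolding X_def
    using \<open>t > 0\<close> by (intro hoeffding_causal_filter_trunc[OF assms(1) phi01 K(2) \<open>finite K\<close> False]
        divide_nonneg_nonneg mult_nonneg_nonneg) auto
  also have "\<dots> \<le> 2 * exp (-2 * t\<^sup>2 / (real m)\<^sup>2) ^ n"
  proof -
    have "real n * (t / real m)\<^sup>2 * real (card K) \<le> real n * (t / real m)\<^sup>2 * real n"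
      using card(2) by (intro mult_left_mono) auto
    moreover have "(real n * t / real m)\<^sup>2 = real n * (t / real m)\<^sup>2 * real n"
      by (simp add: power2_eq_square)
    ultimately have "real n * (t / real m)\<^sup>2 \<le> (real n * t / real m)\<^sup>2 / real (card K)"
      using card(1) by (simp add: pos_le_divide_eq)
    moreover have "-2 * (real n * t / real m)\<^sup>2 / real (card K) = -2 * ((real n * t / real m)\<^sup>2 / real (card K))"
      by simp
    moreover have "real n * (-2 * t\<^sup>2 / (real m)\<^sup>2) = -2 * (real n * (t / real m)\<^sup>2)"
      by (simp add: power_divide)
    ultimately have "-2 * (real n * t / real m)\<^sup>2 / real (card K) \<le> real n * (-2 * t\<^sup>2 / (real m)\<^sup>2)"
      by linarith
    then have "2 * exp (-2 * (real n * t / real m)\<^sup>2 / real (card K)) \<le> 2 * exp (real n * (-2 * t\<^sup>2 / (real m)\<^sup>2))"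
      by simp
    then show ?thesis
      by (simp only: exp_of_nat_mult)
  qed
  finally show ?thesis .
qed

lemma prob_causal_filter_trunc_deviation:
  fixes \<phi> :: "real \<Rightarrow> real" and a :: "nat \<Rightarrow> real" and m n :: nat
  assumes [measurable]: "\<phi> \<in> borel_measurable borel" and phi01: "\<And>t. 0 \<le> \<phi> t \<and> \<phi> t \<le> 1"
    and m: "m \<ge> 1" and t: "t > 0" and n: "n \<ge> 1"
  defines "X \<equiv> \<lambda>k \<omega>. \<phi> (causal_filter_trunc a m (int k) (path \<omega>))"
  shows "prob {\<omega>\<in>space M. t \<le> \<bar>(\<Sum>k\<in>{1..n}. X k \<omega>) / real n - expectation (X 0)\<bar>}
     \<le> real m * (2 * exp (-2 * t\<^sup>2 / (real m)\<^sup>2) ^ n)"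
proof -
  define \<mu> where "\<mu> = expectation (X 0)"
  have "(t \<le> \<bar>S / real n - \<mu>\<bar>) \<longleftrightarrow> (real n * t \<le> \<bar>S - real n * \<mu>\<bar>)" for S
  proof -
    have "\<bar>S / real n - \<mu>\<bar> = \<bar>S - real n * \<mu>\<bar> / real n"
      using n by (simp add: field_simps abs_divide)
    then show ?thesis
      using n by (simp add: le_divide_eq mult.commute)
  qed
  then have eq: "{\<omega>\<in>space M. t \<le> \<bar>(\<Sum>k\<in>{1..n}. X k \<omega>) / real n - \<mu>\<bar>}
      = {\<omega>\<in>space M. real n * t \<le> \<bar>(\<Sum>k\<in>{1..n}. X k \<omega>) - real n * \<mu>\<bar>}"
    by blast
  define K where "K r = {k\<in>{1..n}. k mod m = r}" for r
  define E where "E r = {\<omega>\<in>space M. real n * t / real m \<le> \<bar>(\<Sum>k\<in>K r. X k \<omega>) - real (card (K r)) * \<mu>\<bar>}" for r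
  have [measurable]: "E r \<in> sets M" for r
    unfolding E_def X_def by measurable
  have "{\<omega>\<in>space M. real n * t \<le> \<bar>(\<Sum>k\<in>{1..n}. X k \<omega>) - real n * \<mu>\<bar>} \<subseteq> (\<Union>r<m. E r)"
  proof (intro subsetI, rule ccontr)
    fix \<omega> assume \<omega>: "\<omega> \<in> {\<omega>\<in>space M. real n * t \<le> \<bar>(\<Sum>k\<in>{1..n}. X k \<omega>) - real n * \<mu>\<bar>}" "\<omega> \<notin> (\<Union>r<m. E r)"
    have "\<bar>(\<Sum>k\<in>{1..n}. X k \<omega>) - real (card {1..n}) * \<mu>\<bar>
        \<le> (\<Sum>r<m. \<bar>(\<Sum>k\<in>K r. X k \<omega>) - real (card (K r)) * \<mu>\<bar>)"
      unfolding K_def by (rule abs_sum_deviation_le_residue_classes) (use m in auto)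
    also have "\<dots> < (\<Sum>r<m. real n * t / real m)"
      using \<omega> m by (intro sum_strict_mono) (auto simp: E_def not_le lessThan_empty_iff)
    finally show False
      using \<omega> m by simp
  qed
  then have "prob {\<omega>\<in>space M. t \<le> \<bar>(\<Sum>k\<in>{1..n}. X k \<omega>) / real n - \<mu>\<bar>} \<le> prob (\<Union>r<m. E r)"
    unfolding eq by (intro finite_measure_mono) auto
  also have "\<dots> \<le> (\<Sum>r<m. prob (E r))"
    by (intro finite_measure_subadditive_finite) auto
  also have "\<dots> \<le> (\<Sum>r<m. 2 * exp (-2 * t\<^sup>2 / (real m)\<^sup>2) ^ n)"
    unfolding E_def \<mu>_def X_def
    by (intro sum_mono prob_residue_class_deviation[OF assms(1) phi01 m t n]) (auto simp: K_def)
  finally show ?thesis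
    by (simp add: \<mu>_def)
qed

lemma slln_causal_filter_trunc:
  fixes \<phi> :: "real \<Rightarrow> real"
  assumes [measurable]: "\<phi> \<in> borel_measurable borel" and phi01: "\<And>t. 0 \<le> \<phi> t \<and> \<phi> t \<le> 1"
    and "m \<ge> 1"
  shows "AE \<omega> in M. (\<lambda>n. (\<Sum>k\<in>{1..n}. \<phi> (causal_filter_trunc a m (int k) (path \<omega>))) / real n)
           \<longlonglongrightarrow> expectation (\<lambda>\<omega>. \<phi> (causal_filter_trunc a m 0 (path \<omega>)))"
proof (rule AE_tendsto_if_AE_eventually_close)
  fix t :: real assume "t > 0"
  define q where "q = exp (-2 * t\<^sup>2 / (real m)\<^sup>2)"
  define A where "A n = {\<omega>\<in>space M. t \<le> \<bar>(\<Sum>k\<in>{1..n}. \<phi> (causal_filter_trunc a m (int k) (path \<omega>))) / real n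
      - expectation (\<lambda>\<omega>. \<phi> (causal_filter_trunc a m 0 (path \<omega>)))\<bar>}" for n
  have [measurable]: "A n \<in> sets M" for n
    unfolding A_def by measurable
  have "q < 1"
    using \<open>t > 0\<close> \<open>m \<ge> 1\<close> by (simp add: q_def)
  have "summable (\<lambda>n. prob (A n))"
  proof (rule summable_comparison_test')
    show "summable (\<lambda>n. real m * (2 * q ^ n))"
      using \<open>q < 1\<close> by (intro summable_mult summable_geometric) (auto simp: q_def)
    show "norm (prob (A n)) \<le> real m * (2 * q ^ n)" if "n \<ge> 1" for n
      unfolding A_def q_def
      using prob_causal_filter_trunc_deviation[OF assms(1) phi01 \<open>m \<ge> 1\<close> \<open>t > 0\<close> that] by simp
  qed
  then have "AE \<omega> in M. eventually (\<lambda>n. \<omega> \<in> space M - A n) sequentially"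
    by (intro borel_cantelli_AE1) (auto simp: emeasure_eq_measure)
  then show "AE \<omega> in M. eventually (\<lambda>n. \<bar>(\<Sum>k\<in>{1..n}. \<phi> (causal_filter_trunc a m (int k) (path \<omega>))) / real n
      - expectation (\<lambda>\<omega>. \<phi> (causal_filter_trunc a m 0 (path \<omega>)))\<bar> \<le> t) sequentially"
    by (elim eventually_mono) (auto simp: A_def)
qed

end

definition trunc_error :: "real \<Rightarrow> (nat \<Rightarrow> real) \<Rightarrow> nat \<Rightarrow> int \<Rightarrow> (int \<Rightarrow> real) \<Rightarrow> real" where
  "trunc_error L a m k e = min 1 (L * \<bar>causal_filter a k e - causal_filter_trunc a m k e\<bar>)"

lemma measurable_trunc_error[measurable]: "trunc_error L a m k \<in> borel_measurable (PiM UNIV (\<lambda>_. borel))"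
  unfolding trunc_error_def by measurable

lemma trunc_error_funpow_shift_left: "trunc_error L a m 0 ((shift_left ^^ k) e) = trunc_error L a m (int k) e"
  by (simp add: trunc_error_def causal_filter_funpow_shift_left causal_filter_trunc_funpow_shift_left)

lemma trunc_error_bounds: "L \<ge> 0 \<Longrightarrow> 0 \<le> trunc_error L a m k e \<and> trunc_error L a m k e \<le> 1"
  by (simp add: trunc_error_def)

lemma abs_diff_le_trunc_error:
  fixes \<phi> :: "real \<Rightarrow> real"
  assumes "lipschitz_on L UNIV \<phi>" and "\<And>t. 0 \<le> \<phi> t \<and> \<phi> t \<le> 1"
  shows "\<bar>\<phi> (causal_filter a k e) - \<phi> (causal_filter_trunc a m k e)\<bar> \<le> trunc_error L a m k e"
proof -
  have "\<bar>\<phi> x - \<phi> y\<bar> \<le> L * \<bar>x - y\<bar>" for x y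
    using lipschitz_onD[OF assms(1), of x y] by (simp add: dist_real_def)
  moreover have "\<bar>\<phi> x - \<phi> y\<bar> \<le> 1" for x y
    using assms(2)[of x] assms(2)[of y] by auto
  ultimately show ?thesis
    by (simp add: trunc_error_def)
qed

lemma abs_average_diff_le:
  fixes x y w :: "nat \<Rightarrow> real"
  assumes "\<And>k. \<bar>x k - y k\<bar> \<le> w k" and "(\<Sum>k\<in>{1..n}. w k) \<le> real n * c" and "n \<ge> 1"
  shows "\<bar>(\<Sum>k\<in>{1..n}. x k) / real n - (\<Sum>k\<in>{1..n}. y k) / real n\<bar> \<le> c"
proof -
  have "\<bar>(\<Sum>k\<in>{1..n}. x k) - (\<Sum>k\<in>{1..n}. y k)\<bar> \<le> (\<Sum>k\<in>{1..n}. w k)"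
    unfolding sum_subtractf[symmetric] by (intro order.trans[OF sum_abs] sum_mono assms(1))
  with assms(2,3) show ?thesis
    by (simp add: diff_divide_distrib[symmetric] abs_divide pos_divide_le_eq mult.commute)
qed

context iid_sequence
begin

lemma prob_trunc_error_exceeds:
  assumes "L \<ge> 0" and "l > 0"
  shows "prob {\<omega>\<in>space M. \<exists>n\<ge>1. (\<Sum>k\<in>{1..n}. trunc_error L a m (int k) (path \<omega>)) > real n * l}
           \<le> expectation (\<lambda>\<omega>. trunc_error L a m 0 (path \<omega>)) / l"
  using maximal_inequality_path[of "trunc_error L a m 0", OF _ trunc_error_bounds[OF \<open>L \<ge> 0\<close>] \<open>l > 0\<close>]
  by (simp add: trunc_error_funpow_shift_left)

lemma AE_causal_filter_trunc_tendsto: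
  assumes "AE \<omega> in M. summable (\<lambda>i. a i * eps (- int i) \<omega>)"
  shows "AE \<omega> in M. (\<lambda>m. causal_filter_trunc a m 0 (path \<omega>)) \<longlonglongrightarrow> causal_filter a 0 (path \<omega>)"
  using assms by (rule AE_mp) (auto intro!: AE_I2 causal_filter_trunc_tendsto simp: path_def)

lemma expectation_comp_causal_filter_trunc_tendsto:
  fixes \<phi> :: "real \<Rightarrow> real"
  assumes conv: "AE \<omega> in M. summable (\<lambda>i. a i * eps (- int i) \<omega>)"
    and phi01: "\<And>t. 0 \<le> \<phi> t \<and> \<phi> t \<le> 1" and cont: "continuous_on UNIV \<phi>"
  shows "(\<lambda>m. expectation (\<lambda>\<omega>. \<phi> (causal_filter_trunc a m 0 (path \<omega>))))
           \<longlonglongrightarrow> expectation (\<lambda>\<omega>. \<phi> (causal_filter a 0 (path \<omega>)))"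
proof (rule integral_dominated_convergence[where w="\<lambda>_. 1"])
  have isCont_\<phi>: "isCont \<phi> x" for x
    using cont by (simp add: continuous_on_eq_continuous_at)
  show "AE \<omega> in M. (\<lambda>m. \<phi> (causal_filter_trunc a m 0 (path \<omega>))) \<longlonglongrightarrow> \<phi> (causal_filter a 0 (path \<omega>))"
    using AE_causal_filter_trunc_tendsto[OF conv]
    by (rule AE_mp) (auto intro!: AE_I2 isCont_tendsto_compose[OF isCont_\<phi>])
  have [measurable]: "\<phi> \<in> borel_measurable borel"
    using cont by (rule borel_measurable_continuous_onI)
  show "(\<lambda>\<omega>. \<phi> (causal_filter_trunc a m 0 (path \<omega>))) \<in> borel_measurable M" for m
    by measurable
  show "(\<lambda>\<omega>. \<phi> (causal_filter a 0 (path \<omega>))) \<in> borel_measurable M"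
    by measurable
qed (use phi01 in \<open>auto simp: abs_le_iff\<close>)

lemma expectation_trunc_error_tendsto_0:
  assumes conv: "AE \<omega> in M. summable (\<lambda>i. a i * eps (- int i) \<omega>)" and "L \<ge> 0"
  shows "(\<lambda>m. expectation (\<lambda>\<omega>. trunc_error L a m 0 (path \<omega>))) \<longlonglongrightarrow> 0"
proof -
  have "(\<lambda>m. expectation (\<lambda>\<omega>. trunc_error L a m 0 (path \<omega>)))
      \<longlonglongrightarrow> expectation (\<lambda>\<omega>. min 1 (L * \<bar>causal_filter a 0 (path \<omega>) - causal_filter a 0 (path \<omega>)\<bar>))"
    unfolding trunc_error_def
  proof (rule integral_dominated_convergence[where w="\<lambda>_. 1"])
    show "AE \<omega> in M. (\<lambda>m. min 1 (L * \<bar>causal_filter a 0 (path \<omega>) - causal_filter_trunc a m 0 (path \<omega>)\<bar>))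
        \<longlonglongrightarrow> min 1 (L * \<bar>causal_filter a 0 (path \<omega>) - causal_filter a 0 (path \<omega>)\<bar>)"
      using AE_causal_filter_trunc_tendsto[OF conv] by (rule AE_mp) (auto intro!: AE_I2 tendsto_eq_intros)
  qed (use \<open>L \<ge> 0\<close> in auto)
  then show ?thesis
    by simp
qed

lemma AE_eventually_average_close_if_trunc_error_small:
  fixes \<phi> :: "real \<Rightarrow> real"
  assumes lip: "lipschitz_on L UNIV \<phi>" and phi01: "\<And>t. 0 \<le> \<phi> t \<and> \<phi> t \<le> 1" and "m \<ge> 1" "t > 0"
  shows "AE \<omega> in M. (\<forall>n\<ge>1. (\<Sum>k\<in>{1..n}. trunc_error L a m (int k) (path \<omega>)) \<le> real n * l) \<longrightarrow>
    eventually (\<lambda>n. \<bar>(\<Sum>k\<in>{1..n}. \<phi> (causal_filter a (int k) (path \<omega>))) / real n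
      - expectation (\<lambda>\<omega>. \<phi> (causal_filter_trunc a m 0 (path \<omega>)))\<bar> \<le> l + t) sequentially"
proof -
  have [measurable]: "\<phi> \<in> borel_measurable borel"
    using lipschitz_on_continuous_on[OF lip] by (rule borel_measurable_continuous_onI)
  have "AE \<omega> in M. (\<lambda>n. (\<Sum>k\<in>{1..n}. \<phi> (causal_filter_trunc a m (int k) (path \<omega>))) / real n)
      \<longlonglongrightarrow> expectation (\<lambda>\<omega>. \<phi> (causal_filter_trunc a m 0 (path \<omega>)))"
    by (rule slln_causal_filter_trunc[OF _ _ \<open>m \<ge> 1\<close>]) (use phi01 in auto)
  then show ?thesis
  proof (rule AE_mp, intro AE_I2 impI)
    fix \<omega> assume lim: "(\<lambda>n. (\<Sum>k\<in>{1..n}. \<phi> (causal_filter_trunc a m (int k) (path \<omega>))) / real n)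
        \<longlonglongrightarrow> expectation (\<lambda>\<omega>. \<phi> (causal_filter_trunc a m 0 (path \<omega>)))"
      and small: "\<forall>n\<ge>1. (\<Sum>k\<in>{1..n}. trunc_error L a m (int k) (path \<omega>)) \<le> real n * l"
    show "eventually (\<lambda>n. \<bar>(\<Sum>k\<in>{1..n}. \<phi> (causal_filter a (int k) (path \<omega>))) / real n
      - expectation (\<lambda>\<omega>. \<phi> (causal_filter_trunc a m 0 (path \<omega>)))\<bar> \<le> l + t) sequentially"
      using tendstoD[OF lim \<open>t > 0\<close>] eventually_ge_at_top[of 1]
    proof eventually_elim
      case (elim n)
      have "\<bar>(\<Sum>k\<in>{1..n}. \<phi> (causal_filter a (int k) (path \<omega>))) / real n
          - (\<Sum>k\<in>{1..n}. \<phi> (causal_filter_trunc a m (int k) (path \<omega>))) / real n\<bar> \<le> l"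
        using small elim(2)
        by (intro abs_average_diff_le[where w="\<lambda>k. trunc_error L a m (int k) (path \<omega>)"]
            abs_diff_le_trunc_error[OF lip phi01]) auto
      with elim(1) show ?case
        unfolding dist_real_def by linarith
    qed
  qed
qed

lemma small_exceptional_set_for_truncation:
  fixes \<phi> :: "real \<Rightarrow> real"
  assumes lip: "lipschitz_on L UNIV \<phi>" and phi01: "\<And>t. 0 \<le> \<phi> t \<and> \<phi> t \<le> 1"
    and "m \<ge> 1" "l > 0" "t > 0"
  obtains N where "N \<in> sets M" "prob N \<le> expectation (\<lambda>\<omega>. trunc_error L a m 0 (path \<omega>)) / l"
    "AE \<omega> in M. \<omega> \<notin> N \<longrightarrow> eventually (\<lambda>n. \<bar>(\<Sum>k\<in>{1..n}. \<phi> (causal_filter a (int k) (path \<omega>))) / real n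
      - expectation (\<lambda>\<omega>. \<phi> (causal_filter_trunc a m 0 (path \<omega>)))\<bar> \<le> l + t) sequentially"
proof
  define N where "N = {\<omega>\<in>space M. \<exists>n\<ge>1. (\<Sum>k\<in>{1..n}. trunc_error L a m (int k) (path \<omega>)) > real n * l}"
  show "N \<in> sets M"
    unfolding N_def by measurable
  show "prob N \<le> expectation (\<lambda>\<omega>. trunc_error L a m 0 (path \<omega>)) / l"
    unfolding N_def using lipschitz_on_nonneg[OF lip] \<open>l > 0\<close> by (rule prob_trunc_error_exceeds)
  show "AE \<omega> in M. \<omega> \<notin> N \<longrightarrow> eventually (\<lambda>n. \<bar>(\<Sum>k\<in>{1..n}. \<phi> (causal_filter a (int k) (path \<omega>))) / real n
      - expectation (\<lambda>\<omega>. \<phi> (causal_filter_trunc a m 0 (path \<omega>)))\<bar> \<le> l + t) sequentially"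
    using AE_eventually_average_close_if_trunc_error_small[OF lip phi01 \<open>m \<ge> 1\<close> \<open>t > 0\<close>, where l=l and a=a]
    by (rule AE_mp) (auto intro!: AE_I2 simp: N_def not_less)
qed

lemma slln_lipschitz_causal_filter:
  fixes \<phi> :: "real \<Rightarrow> real"
  assumes conv: "AE \<omega> in M. summable (\<lambda>i. a i * eps (- int i) \<omega>)"
    and phi01: "\<And>t. 0 \<le> \<phi> t \<and> \<phi> t \<le> 1" and lip: "lipschitz_on L UNIV \<phi>"
  shows "AE \<omega> in M. (\<lambda>n. (\<Sum>k\<in>{1..n}. \<phi> (causal_filter a (int k) (path \<omega>))) / real n)
           \<longlonglongrightarrow> expectation (\<lambda>\<omega>. \<phi> (causal_filter a 0 (path \<omega>)))"
proof (rule AE_tendsto_if_AE_eventually_close)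
  let ?avg = "\<lambda>n \<omega>. (\<Sum>k\<in>{1..n}. \<phi> (causal_filter a (int k) (path \<omega>))) / real n"
  let ?E = "expectation (\<lambda>\<omega>. \<phi> (causal_filter a 0 (path \<omega>)))"
  let ?\<mu> = "\<lambda>m. expectation (\<lambda>\<omega>. \<phi> (causal_filter_trunc a m 0 (path \<omega>)))"
  let ?\<rho> = "\<lambda>m. expectation (\<lambda>\<omega>. trunc_error L a m 0 (path \<omega>))"
  fix e :: real assume "e > 0"
  show "AE \<omega> in M. eventually (\<lambda>n. \<bar>?avg n \<omega> - ?E\<bar> \<le> e) sequentially"
  proof (rule AE_if_small_exceptional_sets)
    fix r :: real assume "r > 0"
    have "eventually (\<lambda>m. dist (?\<mu> m) ?E < e / 4) sequentially"
      by (rule tendstoD[OF expectation_comp_causal_filter_trunc_tendsto[OF conv phi01 lipschitz_on_continuous_on[OF lip]]])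
        (use \<open>e > 0\<close> in simp)
    moreover have "eventually (\<lambda>m. dist (?\<rho> m) 0 < r * (e / 2)) sequentially"
      by (rule tendstoD[OF expectation_trunc_error_tendsto_0[OF conv lipschitz_on_nonneg[OF lip]]])
        (use \<open>e > 0\<close> \<open>r > 0\<close> in simp)
    ultimately have "eventually (\<lambda>m. m \<ge> 1 \<and> dist (?\<mu> m) ?E < e / 4 \<and> dist (?\<rho> m) 0 < r * (e / 2)) sequentially"
      using eventually_ge_at_top[of 1] by eventually_elim auto
    then obtain m where m: "m \<ge> 1" "dist (?\<mu> m) ?E < e / 4" "dist (?\<rho> m) 0 < r * (e / 2)"
      using eventually_happens'[OF sequentially_bot] by blast
    have "e / 2 > 0" "e / 4 > 0"
      using \<open>e > 0\<close> by simp_all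
    then obtain N where N: "N \<in> sets M" "prob N \<le> ?\<rho> m / (e / 2)"
      "AE \<omega> in M. \<omega> \<notin> N \<longrightarrow> eventually (\<lambda>n. \<bar>?avg n \<omega> - ?\<mu> m\<bar> \<le> e / 2 + e / 4) sequentially"
      by (rule small_exceptional_set_for_truncation[OF lip phi01 m(1)])
    have "?\<rho> m / (e / 2) < r"
      using m(3) \<open>e > 0\<close> by (simp add: dist_real_def abs_less_iff pos_divide_less_eq)
    moreover have "AE \<omega> in M. \<omega> \<notin> N \<longrightarrow> eventually (\<lambda>n. \<bar>?avg n \<omega> - ?E\<bar> \<le> e) sequentially"
      using N(3)
    proof (rule AE_mp, intro AE_I2 impI)
      fix \<omega> assume "\<omega> \<notin> N \<longrightarrow> eventually (\<lambda>n. \<bar>?avg n \<omega> - ?\<mu> m\<bar> \<le> e / 2 + e / 4) sequentially" "\<omega> \<notin> N"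
      then have "eventually (\<lambda>n. \<bar>?avg n \<omega> - ?\<mu> m\<bar> \<le> e / 2 + e / 4) sequentially"
        by blast
      then show "eventually (\<lambda>n. \<bar>?avg n \<omega> - ?E\<bar> \<le> e) sequentially"
        by (rule eventually_mono) (use m(2) in \<open>unfold dist_real_def abs_le_iff abs_less_iff, linarith\<close>)
    qed
    ultimately show "\<exists>N\<in>sets M. prob N \<le> r \<and> (AE \<omega> in M. \<omega> \<notin> N \<longrightarrow>
        eventually (\<lambda>n. \<bar>?avg n \<omega> - ?E\<bar> \<le> e) sequentially)"
      using N(1,2) by force
  qed
qed

end

section \<open>Empirical distribution functions and quantiles\<close>

definition ramp :: "real \<Rightarrow> real \<Rightarrow> real \<Rightarrow> real" where
  "ramp z \<delta> t = max 0 (min 1 ((z - t) / \<delta>))"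

lemma ramp_bounds: "0 \<le> ramp z \<delta> t \<and> ramp z \<delta> t \<le> 1"
  by (simp add: ramp_def)

lemma lipschitz_on_ramp:
  assumes "\<delta> > 0"
  shows "lipschitz_on (1 / \<delta>) UNIV (ramp z \<delta>)"
proof (rule lipschitz_onI)
  fix s t :: real
  have clamp: "\<bar>max 0 (min 1 x) - max 0 (min 1 y)\<bar> \<le> \<bar>x - y\<bar>" for x y :: real
    by (auto simp: max_def min_def abs_if)
  have "\<bar>(z - s) / \<delta> - (z - t) / \<delta>\<bar> = 1 / \<delta> * \<bar>s - t\<bar>"
    using assms by (simp add: diff_divide_distrib[symmetric] abs_divide abs_minus_commute)
  then show "dist (ramp z \<delta> s) (ramp z \<delta> t) \<le> 1 / \<delta> * dist s t"
    using clamp[of "(z - s) / \<delta>" "(z - t) / \<delta>"] by (simp add: ramp_def dist_real_def)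
qed (use assms in simp)

lemma indicator_le_ramp: "\<delta> > 0 \<Longrightarrow> indicator {..z - \<delta>} t \<le> ramp z \<delta> t"
  by (auto simp: ramp_def indicator_def field_simps)

lemma ramp_le_indicator: "\<delta> > 0 \<Longrightarrow> ramp z \<delta> t \<le> indicator {..z} t"
  by (auto simp: ramp_def indicator_def divide_le_0_iff)

lemma (in prob_space) expectation_ramp_bounds:
  assumes [measurable]: "X \<in> borel_measurable M" and "\<delta> > 0"
  shows "prob {\<omega>\<in>space M. X \<omega> \<le> z - \<delta>} \<le> expectation (\<lambda>\<omega>. ramp z \<delta> (X \<omega>))"
    and "expectation (\<lambda>\<omega>. ramp z \<delta> (X \<omega>)) \<le> prob {\<omega>\<in>space M. X \<omega> \<le> z}"
proof -
  have prob_eq: "prob {\<omega>\<in>space M. X \<omega> \<le> c} = expectation (\<lambda>\<omega>. indicator {..c} (X \<omega>))" for c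
  proof -
    have "expectation (\<lambda>\<omega>. indicator {..c} (X \<omega>)) = expectation (indicator {\<omega>\<in>space M. X \<omega> \<le> c})"
      by (rule Bochner_Integration.integral_cong) (auto simp: indicator_def)
    also have "\<dots> = prob {\<omega>\<in>space M. X \<omega> \<le> c}"
      by (simp add: Int_absorb2)
    finally show ?thesis ..
  qed
  have int_ind: "integrable M (\<lambda>\<omega>. indicator {..c} (X \<omega>) :: real)" for c
    by (rule integrable_const_bound[where B=1]) (auto simp: indicator_def)
  have int_ramp: "integrable M (\<lambda>\<omega>. ramp z \<delta> (X \<omega>))"
    by (rule integrable_const_bound[where B=1]) (auto simp: ramp_bounds abs_le_iff ramp_def)
  show "prob {\<omega>\<in>space M. X \<omega> \<le> z - \<delta>} \<le> expectation (\<lambda>\<omega>. ramp z \<delta> (X \<omega>))"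
    unfolding prob_eq using \<open>\<delta> > 0\<close>
    by (intro Bochner_Integration.integral_mono[OF int_ind int_ramp] indicator_le_ramp)
  show "expectation (\<lambda>\<omega>. ramp z \<delta> (X \<omega>)) \<le> prob {\<omega>\<in>space M. X \<omega> \<le> z}"
    unfolding prob_eq using \<open>\<delta> > 0\<close>
    by (intro Bochner_Integration.integral_mono[OF int_ramp int_ind] ramp_le_indicator)
qed

lemma emp_cdf_eq_average: "emp_cdf Y n z = (\<Sum>i\<in>{1..n}. indicator {..z} (Y i)) / real n"
  unfolding emp_cdf_def by (intro arg_cong[where f="\<lambda>s. s / real n"] sum.cong) (auto simp: indicator_def)

context iid_sequence
begin

lemma AE_eventually_emp_cdf_between_ramps:
  assumes conv: "AE \<omega> in M. summable (\<lambda>i. a i * eps (- int i) \<omega>)" and "\<delta> > 0" and "e > 0"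
  shows "AE \<omega> in M. eventually (\<lambda>n.
      expectation (\<lambda>\<omega>. ramp z \<delta> (causal_filter a 0 (path \<omega>))) - e
        < emp_cdf (\<lambda>i. causal_filter a (int i) (path \<omega>)) n z \<and>
      emp_cdf (\<lambda>i. causal_filter a (int i) (path \<omega>)) n z
        < expectation (\<lambda>\<omega>. ramp (z + \<delta>) \<delta> (causal_filter a 0 (path \<omega>))) + e) sequentially"
proof -
  define avg where "avg f n \<omega> = (\<Sum>k\<in>{1..n}. f (causal_filter a (int k) (path \<omega>))) / real n" for f n \<omega>
  have slln: "AE \<omega> in M. (\<lambda>n. avg (ramp c \<delta>) n \<omega>) \<longlonglongrightarrow> expectation (\<lambda>\<omega>. ramp c \<delta> (causal_filter a 0 (path \<omega>)))" for c
    unfolding avg_def by (rule slln_lipschitz_causal_filter[OF conv ramp_bounds lipschitz_on_ramp[OF \<open>\<delta> > 0\<close>]])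
  show ?thesis
    using slln[of z] slln[of "z + \<delta>"]
  proof eventually_elim
    case (elim \<omega>)
    from elim[THEN tendstoD, OF \<open>e > 0\<close>] show ?case
    proof eventually_elim
      case (elim n)
      have "avg (ramp z \<delta>) n \<omega> \<le> emp_cdf (\<lambda>i. causal_filter a (int i) (path \<omega>)) n z"
        unfolding avg_def emp_cdf_eq_average
        by (intro divide_right_mono sum_mono ramp_le_indicator \<open>\<delta> > 0\<close>) simp
      moreover have "emp_cdf (\<lambda>i. causal_filter a (int i) (path \<omega>)) n z \<le> avg (ramp (z + \<delta>) \<delta>) n \<omega>"
        unfolding avg_def emp_cdf_eq_average using indicator_le_ramp[OF \<open>\<delta> > 0\<close>, of "z + \<delta>"]
        by (intro divide_right_mono sum_mono) auto
      ultimately show ?case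
        using elim unfolding dist_real_def abs_less_iff by linarith
    qed
  qed
qed

lemma emp_cdf_causal_filter_tendsto:
  assumes conv: "AE \<omega> in M. summable (\<lambda>i. a i * eps (- int i) \<omega>)"
    and F: "\<And>y. F y = prob {\<omega>\<in>space M. causal_filter a 0 (path \<omega>) \<le> y}"
    and "isCont F z"
  shows "AE \<omega> in M. (\<lambda>n. emp_cdf (\<lambda>i. causal_filter a (int i) (path \<omega>)) n z) \<longlonglongrightarrow> F z"
proof (rule AE_tendsto_if_AE_eventually_close)
  fix e :: real assume "e > 0"
  obtain \<delta> where "\<delta> > 0" and \<delta>: "\<And>y. \<bar>y - z\<bar> \<le> \<delta> \<Longrightarrow> \<bar>F y - F z\<bar> < e / 2"
  proof -
    obtain d where "d > 0" "\<And>y. \<bar>y - z\<bar> < d \<Longrightarrow> \<bar>F y - F z\<bar> < e / 2"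
      using \<open>isCont F z\<close> \<open>e > 0\<close> unfolding continuous_at_eps_delta dist_real_def
      by (metis half_gt_zero)
    then show ?thesis
      by (intro that[of "d / 2"]) auto
  qed
  have up: "expectation (\<lambda>\<omega>. ramp (z + \<delta>) \<delta> (causal_filter a 0 (path \<omega>))) \<le> F (z + \<delta>)"
    unfolding F by (rule expectation_ramp_bounds(2)) (use \<open>\<delta> > 0\<close> in simp_all)
  have lo: "F (z - \<delta>) \<le> expectation (\<lambda>\<omega>. ramp z \<delta> (causal_filter a 0 (path \<omega>)))"
    unfolding F by (rule expectation_ramp_bounds(1)) (use \<open>\<delta> > 0\<close> in simp_all)
  have F_up: "\<bar>F (z + \<delta>) - F z\<bar> < e / 2"
    by (rule \<delta>) (use \<open>\<delta> > 0\<close> in simp)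
  have F_lo: "\<bar>F (z - \<delta>) - F z\<bar> < e / 2"
    by (rule \<delta>) (use \<open>\<delta> > 0\<close> in simp)
  have "e / 2 > 0"
    using \<open>e > 0\<close> by simp
  from AE_eventually_emp_cdf_between_ramps[OF conv \<open>\<delta> > 0\<close> this, where z=z]
  show "AE \<omega> in M. eventually (\<lambda>n.
      \<bar>emp_cdf (\<lambda>i. causal_filter a (int i) (path \<omega>)) n z - F z\<bar> \<le> e) sequentially"
    by (elim eventually_mono) (use up lo F_up F_lo in \<open>unfold abs_le_iff abs_less_iff, linarith\<close>)
qed

end

lemma emp_cdf_mono: "y \<le> y' \<Longrightarrow> emp_cdf Y n y \<le> emp_cdf Y n y'"
  unfolding emp_cdf_def by (intro divide_right_mono sum_mono) auto

lemma emp_cdf_strict_mono_comp: "strict_mono g \<Longrightarrow> emp_cdf (\<lambda>i. g (Y i)) n (g y) = emp_cdf Y n y"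
  by (simp add: emp_cdf_def strict_mono_less_eq)

lemma emp_cdf_eq_1: "n \<ge> 1 \<Longrightarrow> (\<And>i. i \<in> {1..n} \<Longrightarrow> Y i \<le> y) \<Longrightarrow> emp_cdf Y n y = 1"
  by (simp add: emp_cdf_def)

lemma emp_cdf_eq_0: "(\<And>i. i \<in> {1..n} \<Longrightarrow> y < Y i) \<Longrightarrow> emp_cdf Y n y = 0"
  by (auto simp: emp_cdf_def not_le[symmetric] intro!: sum.neutral)

lemma emp_quantile_between:
  assumes "emp_cdf Y n l < p" and "p \<le> emp_cdf Y n u"
  shows "l \<le> emp_quantile Y n p" and "emp_quantile Y n p \<le> u"
proof -
  have lower: "l \<le> y" if "p \<le> emp_cdf Y n y" for y
    using emp_cdf_mono[of y l Y n] that assms(1) by (cases "y < l") auto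
  show "l \<le> emp_quantile Y n p"
    unfolding emp_quantile_def by (rule cInf_greatest) (use assms(2) lower in auto)
  show "emp_quantile Y n p \<le> u"
    unfolding emp_quantile_def by (rule cInf_lower) (use assms(2) lower in \<open>auto simp: bdd_below_def\<close>)
qed

lemma emp_quantile_mono:
  assumes "n \<ge> 1" "0 < p" "p \<le> p'" "p' \<le> 1"
  shows "emp_quantile Y n p \<le> emp_quantile Y n p'"
  unfolding emp_quantile_def
proof (rule cInf_superset_mono)
  let ?Y = "Y ` {1..n}"
  have "p' \<le> emp_cdf Y n (Max ?Y)"
    using assms by (subst emp_cdf_eq_1) auto
  then show "{y. p' \<le> emp_cdf Y n y} \<noteq> {}"
    by blast
  have "Min ?Y \<le> y" if "p \<le> emp_cdf Y n y" for y
  proof (rule ccontr)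
    assume "\<not> Min ?Y \<le> y"
    moreover have "Min ?Y \<le> Y i" if "i \<in> {1..n}" for i
      using that by (intro Min_le) auto
    ultimately have "emp_cdf Y n y = 0"
      by (intro emp_cdf_eq_0) (meson not_le order.strict_trans2)
    with that \<open>0 < p\<close> show False
      by simp
  qed
  then show "bdd_below {y. p \<le> emp_cdf Y n y}"
    by (auto simp: bdd_below_def)
  show "{y. p' \<le> emp_cdf Y n y} \<subseteq> {y. p \<le> emp_cdf Y n y}"
    using \<open>p \<le> p'\<close> by auto
qed

lemma Rats_eventually_at_left:
  fixes x :: real
  assumes "eventually P (at_left x)"
  shows "\<exists>q\<in>\<rat>. q < x \<and> P q"
proof -
  obtain b where "b < x" "\<And>y. b < y \<Longrightarrow> y < x \<Longrightarrow> P y"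
    using assms by (auto simp: eventually_at_left_field)
  moreover obtain q where "q \<in> \<rat>" "b < q" "q < x"
    using Rats_dense_in_real[OF \<open>b < x\<close>] by blast
  ultimately show ?thesis
    by blast
qed

lemma Rats_eventually_at_right:
  fixes x :: real
  assumes "eventually P (at_right x)"
  shows "\<exists>q\<in>\<rat>. x < q \<and> P q"
proof -
  obtain b where "x < b" "\<And>y. x < y \<Longrightarrow> y < b \<Longrightarrow> P y"
    using assms by (auto simp: eventually_at_right_field)
  moreover obtain q where "q \<in> \<rat>" "x < q" "q < b"
    using Rats_dense_in_real[OF \<open>x < b\<close>] by blast
  ultimately show ?thesis
    by blast
qed

lemma emp_quantile_tendsto:
  fixes x :: real
  assumes left: "\<forall>\<^sub>F l in at_left x. F l < F x" and right: "\<forall>\<^sub>F u in at_right x. F x < F u"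
    and "isCont g x"
    and lim: "\<And>t. t \<in> \<rat> \<Longrightarrow> (\<lambda>n. emp_cdf Y n (g t)) \<longlonglongrightarrow> F t"
  shows "(\<lambda>n. emp_quantile Y n (F x)) \<longlonglongrightarrow> g x"
  unfolding tendsto_iff
proof (intro allI impI)
  fix \<epsilon> :: real assume "\<epsilon> > 0"
  have close: "\<forall>\<^sub>F y in at x within S. dist (g y) (g x) < \<epsilon>" for S
    by (rule tendstoD[OF continuous_at_imp_continuous_within[OF \<open>isCont g x\<close>, unfolded continuous_within] \<open>\<epsilon> > 0\<close>])
  obtain l where "l \<in> \<rat>" "F l < F x" "dist (g l) (g x) < \<epsilon>"
    using Rats_eventually_at_left[OF eventually_conj[OF left close]] by blast
  moreover obtain u where "u \<in> \<rat>" "F x < F u" "dist (g u) (g x) < \<epsilon>"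
    using Rats_eventually_at_right[OF eventually_conj[OF right close]] by blast
  ultimately have "eventually (\<lambda>n. emp_cdf Y n (g l) < F x \<and> F x < emp_cdf Y n (g u)) sequentially"
    using lim by (intro eventually_conj order_tendstoD) auto
  then show "eventually (\<lambda>n. dist (emp_quantile Y n (F x)) (g x) < \<epsilon>) sequentially"
  proof eventually_elim
    case (elim n)
    then have "g l \<le> emp_quantile Y n (F x)" "emp_quantile Y n (F x) \<le> g u"
      using emp_quantile_between[of Y n "g l" "F x" "g u"] by auto
    with \<open>dist (g l) (g x) < \<epsilon>\<close> \<open>dist (g u) (g x) < \<epsilon>\<close> show ?case
      by (simp add: dist_real_def abs_less_iff)
  qed
qed

section \<open>Uniform convergence of monotone functions\<close>

lemma floor_grid_bracket:
  fixes c x h :: real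
  assumes "h > 0" and "c \<le> x"
  defines "i \<equiv> nat \<lfloor>(x - c) / h\<rfloor>"
  shows "c + real i * h \<le> x" and "x < c + real (Suc i) * h"
proof -
  have "real i \<le> (x - c) / h" "(x - c) / h < real i + 1"
    using assms by (auto simp: i_def)
  then show "c + real i * h \<le> x" "x < c + real (Suc i) * h"
    using \<open>h > 0\<close> by (auto simp: field_simps)
qed

lemma finite_mesh_of_interval:
  fixes c d \<delta> :: real
  assumes "c \<le> d" and "\<delta> > 0"
  obtains S where "finite S" "S \<subseteq> {c..d}"
    "\<And>x. x \<in> {c..d} \<Longrightarrow> \<exists>s\<in>S. \<exists>s'\<in>S. s \<le> x \<and> x \<le> s' \<and> s' - s < \<delta>"
proof
  define h where "h = \<delta> / 2"
  define I where "I = {i :: nat. c + real i * h \<le> d}"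
  define S where "S = insert d ((\<lambda>i. c + real i * h) ` I)"
  have "h > 0"
    using assms by (simp add: h_def)
  have "i \<le> nat \<lfloor>(d - c) / h\<rfloor>" if "i \<in> I" for i
  proof -
    have "real i \<le> (d - c) / h"
      using that \<open>h > 0\<close> by (simp add: I_def pos_le_divide_eq algebra_simps)
    then show ?thesis
      by (simp add: le_nat_iff le_floor_iff)
  qed
  then have "finite I"
    unfolding finite_nat_set_iff_bounded_le by blast
  then show "finite S"
    by (simp add: S_def)
  show "S \<subseteq> {c..d}"
    using \<open>c \<le> d\<close> \<open>h > 0\<close> by (auto simp: S_def I_def)
  fix x assume x: "x \<in> {c..d}"
  define i where "i = nat \<lfloor>(x - c) / h\<rfloor>"
  have i: "c + real i * h \<le> x" "x < c + real (Suc i) * h"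
    using floor_grid_bracket[OF \<open>h > 0\<close>, of c x] x by (simp_all add: i_def)
  define s' where "s' = (if Suc i \<in> I then c + real (Suc i) * h else d)"
  have "c + real i * h \<in> S" "s' \<in> S"
    using i x by (auto simp: S_def I_def s'_def simp del: of_nat_Suc)
  moreover have "real (Suc i) * h = real i * h + h" "\<delta> = 2 * h"
    by (simp_all add: h_def algebra_simps)
  then have "x \<le> s'" "s' - (c + real i * h) < \<delta>"
    using i x \<open>h > 0\<close> by (auto simp: s'_def I_def)
  ultimately show "\<exists>s\<in>S. \<exists>s'\<in>S. s \<le> x \<and> x \<le> s' \<and> s' - s < \<delta>"
    using i(1) by blast
qed

lemma uniform_limit_mono_on_interval:
  fixes q :: "nat \<Rightarrow> real \<Rightarrow> real"
  assumes "c \<le> d" and mono: "\<forall>\<^sub>F n in sequentially. mono_on {c..d} (q n)"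
    and cont: "continuous_on {c..d} g"
    and lim: "\<And>x. x \<in> {c..d} \<Longrightarrow> (\<lambda>n. q n x) \<longlonglongrightarrow> g x"
  shows "uniform_limit {c..d} q g sequentially"
  unfolding uniform_limit_iff
proof (intro allI impI)
  fix \<epsilon> :: real assume "\<epsilon> > 0"
  obtain \<delta> where "\<delta> > 0" and \<delta>: "\<And>x y. x \<in> {c..d} \<Longrightarrow> y \<in> {c..d} \<Longrightarrow> dist y x < \<delta> \<Longrightarrow> dist (g y) (g x) < \<epsilon> / 2"
    using compact_uniformly_continuous[OF cont compact_Icc] \<open>\<epsilon> > 0\<close>
    unfolding uniformly_continuous_on_def by (meson half_gt_zero)
  obtain S where "finite S" "S \<subseteq> {c..d}"
    and mesh: "\<And>x. x \<in> {c..d} \<Longrightarrow> \<exists>s\<in>S. \<exists>s'\<in>S. s \<le> x \<and> x \<le> s' \<and> s' - s < \<delta>"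
    using finite_mesh_of_interval[OF \<open>c \<le> d\<close> \<open>\<delta> > 0\<close>] by blast
  have "\<forall>\<^sub>F n in sequentially. \<forall>s\<in>S. dist (q n s) (g s) < \<epsilon> / 2"
    using \<open>finite S\<close> \<open>S \<subseteq> {c..d}\<close> \<open>\<epsilon> > 0\<close> by (intro eventually_ball_finite ballI tendstoD lim) auto
  with mono show "\<forall>\<^sub>F n in sequentially. \<forall>x\<in>{c..d}. dist (q n x) (g x) < \<epsilon>"
  proof eventually_elim
    case (elim n)
    show ?case
    proof
      fix x assume x: "x \<in> {c..d}"
      then obtain s s' where s: "s \<in> S" "s' \<in> S" "s \<le> x" "x \<le> s'" "s' - s < \<delta>"
        using mesh by blast
      with \<open>S \<subseteq> {c..d}\<close> have "s \<in> {c..d}" "s' \<in> {c..d}"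
        by auto
      have "q n s \<le> q n x" "q n x \<le> q n s'"
        using elim(1) s x \<open>s \<in> {c..d}\<close> \<open>s' \<in> {c..d}\<close> by (auto simp: mono_on_def)
      moreover have "dist (g s) (g x) < \<epsilon> / 2"
        by (rule \<delta>[OF x \<open>s \<in> {c..d}\<close>]) (use s in \<open>simp add: dist_real_def\<close>)
      moreover have "dist (g s') (g x) < \<epsilon> / 2"
        by (rule \<delta>[OF x \<open>s' \<in> {c..d}\<close>]) (use s in \<open>simp add: dist_real_def\<close>)
      moreover have "dist (q n s) (g s) < \<epsilon> / 2" "dist (q n s') (g s') < \<epsilon> / 2"
        using elim(2) s(1,2) by auto
      ultimately show "dist (q n x) (g x) < \<epsilon>"
        unfolding dist_real_def abs_less_iff by linarith
    qed
  qed
qed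

lemma uniform_limit_imp_SUP_abs_diff_tendsto_0:
  fixes f :: "nat \<Rightarrow> 'a \<Rightarrow> real"
  assumes "uniform_limit A f g sequentially" and "A \<noteq> {}"
  shows "(\<lambda>n. SUP x\<in>A. \<bar>f n x - g x\<bar>) \<longlonglongrightarrow> 0"
  unfolding tendsto_iff
proof (intro allI impI)
  fix r :: real assume "r > 0"
  then have "r / 2 > 0"
    by simp
  then have "\<forall>\<^sub>F n in sequentially. \<forall>x\<in>A. dist (f n x) (g x) < r / 2"
    using assms(1) unfolding uniform_limit_iff by blast
  then show "\<forall>\<^sub>F n in sequentially. dist (SUP x\<in>A. \<bar>f n x - g x\<bar>) 0 < r"
  proof eventually_elim
    case (elim n)
    obtain x where "x \<in> A"
      using \<open>A \<noteq> {}\<close> by blast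
    have "(SUP x\<in>A. \<bar>f n x - g x\<bar>) \<le> r / 2"
      using elim \<open>A \<noteq> {}\<close> by (intro cSUP_least) (auto simp: dist_real_def)
    moreover have "bdd_above ((\<lambda>x. \<bar>f n x - g x\<bar>) ` A)"
      using elim by (auto simp: bdd_above_def dist_real_def intro!: exI[of _ "r / 2"] less_imp_le)
    then have "0 \<le> (SUP x\<in>A. \<bar>f n x - g x\<bar>)"
      using cSUP_upper[OF \<open>x \<in> A\<close>] abs_ge_zero order.trans by blast
    ultimately show ?case
      using \<open>r > 0\<close> \<open>(SUP x\<in>A. \<bar>f n x - g x\<bar>) \<le> r / 2\<close> by simp
  qed
qed

section \<open>Consistency of the estimator\<close>

lemma eventually_less_at_left_if_deriv_pos:
  fixes F :: "real \<Rightarrow> real"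
  assumes "(F has_real_derivative f) (at x)" and "f > 0"
  shows "\<forall>\<^sub>F l in at_left x. F l < F x"
proof -
  obtain d where "d > 0" and d: "\<And>h. h > 0 \<Longrightarrow> h < d \<Longrightarrow> F (x - h) < F x"
    using DERIV_pos_inc_left[OF assms] by blast
  show ?thesis
    unfolding eventually_at_left_field
  proof (intro exI[of _ "x - d"] conjI allI impI)
    fix y assume "x - d < y" "y < x"
    then show "F y < F x"
      using d[of "x - y"] by simp
  qed (use \<open>d > 0\<close> in simp)
qed

lemma eventually_greater_at_right_if_deriv_pos:
  fixes F :: "real \<Rightarrow> real"
  assumes "(F has_real_derivative f) (at x)" and "f > 0"
  shows "\<forall>\<^sub>F u in at_right x. F x < F u"
proof -
  obtain d where "d > 0" and d: "\<And>h. h > 0 \<Longrightarrow> h < d \<Longrightarrow> F x < F (x + h)"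
    using DERIV_pos_inc_right[OF assms] by blast
  show ?thesis
    unfolding eventually_at_right_field
  proof (intro exI[of _ "x + d"] conjI allI impI)
    fix y assume "x < y" "y < x + d"
    then show "F x < F y"
      using d[of "y - x"] by simp
  qed (use \<open>d > 0\<close> in simp)
qed

lemma g_hat_tendsto:
  assumes "(F has_real_derivative f) (at x)" and "f > 0" and "isCont g x" and "strict_mono g"
    and lim: "\<And>t. t \<in> \<rat> \<Longrightarrow> (\<lambda>n. emp_cdf Y n t) \<longlonglongrightarrow> F t"
  shows "(\<lambda>n. g_hat (\<lambda>i. g (Y i)) F n x) \<longlonglongrightarrow> g x"
  unfolding g_hat_def
  using eventually_less_at_left_if_deriv_pos[OF assms(1,2)] eventually_greater_at_right_if_deriv_pos[OF assms(1,2)]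
    \<open>isCont g x\<close>
  by (rule emp_quantile_tendsto) (simp add: emp_cdf_strict_mono_comp[OF \<open>strict_mono g\<close>] lim)

lemma g_hat_uniform_limit:
  assumes "c \<le> d"
    and F_deriv: "\<And>x. (F has_real_derivative f x) (at x)" and f_pos: "\<And>x. x \<in> {c..d} \<Longrightarrow> f x > 0"
    and "mono F" and F01: "\<And>x. 0 \<le> F x \<and> F x \<le> 1"
    and g_cont: "\<And>x. isCont g x" and "strict_mono g"
    and lim: "\<And>t. t \<in> \<rat> \<Longrightarrow> (\<lambda>n. emp_cdf Y n t) \<longlonglongrightarrow> F t"
  shows "uniform_limit {c..d} (\<lambda>n. g_hat (\<lambda>i. g (Y i)) F n) g sequentially"
proof (rule uniform_limit_mono_on_interval[OF \<open>c \<le> d\<close>])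
  have F_pos: "0 < F x" if x: "x \<in> {c..d}" for x
  proof -
    obtain l where "F l < F x"
      using eventually_happens'[OF trivial_limit_at_left_real
          eventually_less_at_left_if_deriv_pos[OF F_deriv f_pos[OF x]]] by blast
    then show ?thesis
      using F01[of l] by linarith
  qed
  show "\<forall>\<^sub>F n in sequentially. mono_on {c..d} (g_hat (\<lambda>i. g (Y i)) F n)"
    using eventually_ge_at_top[of 1]
  proof eventually_elim
    case (elim n)
    show ?case
      unfolding mono_on_def g_hat_def
      using elim F_pos F01 monoD[OF \<open>mono F\<close>] by (auto intro!: emp_quantile_mono)
  qed
  show "continuous_on {c..d} g"
    using g_cont by (simp add: continuous_at_imp_continuous_on)
  show "(\<lambda>n. g_hat (\<lambda>i. g (Y i)) F n x) \<longlonglongrightarrow> g x" if "x \<in> {c..d}" for x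
    by (rule g_hat_tendsto[OF F_deriv f_pos[OF that] g_cont \<open>strict_mono g\<close> lim])
qed

lemma SUP_abs_g_hat_diff_tendsto_0:
  assumes "c \<le> d"
    and F_deriv: "\<And>x. (F has_real_derivative f x) (at x)" and f_pos: "0 < (INF x\<in>{c..d}. f x)"
    and "mono F" and "\<And>x. 0 \<le> F x \<and> F x \<le> 1"
    and "\<And>x. isCont g x" and "strict_mono g"
    and "\<And>t. t \<in> \<rat> \<Longrightarrow> (\<lambda>n. emp_cdf Y n t) \<longlonglongrightarrow> F t"
  shows "(\<lambda>n. SUP x\<in>{c..d}. \<bar>g_hat (\<lambda>i. g (Y i)) F n x - g x\<bar>) \<longlonglongrightarrow> 0"
proof (rule uniform_limit_imp_SUP_abs_diff_tendsto_0)
  have "f x \<ge> 0" for x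
    using mono_on_imp_deriv_nonneg[OF \<open>mono F\<close> F_deriv] by simp
  then have "f x > 0" if "x \<in> {c..d}" for x
    using less_cINF_D[OF _ f_pos that] by (auto simp: bdd_below_def)
  then show "uniform_limit {c..d} (\<lambda>n. g_hat (\<lambda>i. g (Y i)) F n) g sequentially"
    using assms by (intro g_hat_uniform_limit[OF \<open>c \<le> d\<close> F_deriv]) auto
qed (use \<open>c \<le> d\<close> in simp)

theorem theorem5:
  fixes M :: "'w measure"
    and eps :: "int \<Rightarrow> 'w \<Rightarrow> real"
    and f_eps :: "real \<Rightarrow> real"
    and a :: "nat \<Rightarrow> real"
    and Z :: "int \<Rightarrow> 'w \<Rightarrow> real"
    and F_Z f_Z g :: "real \<Rightarrow> real"
  assumes M: "prob_space M"
    and indep: "prob_space.indep_vars M (\<lambda>_. borel) eps UNIV"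
    and f_eps_nonneg: "\<And>x. f_eps x \<ge> 0"
    and eps_density: "\<And>i. distributed M lborel (eps i) (\<lambda>x. ennreal (f_eps x))"
    and Z_def: "\<And>k \<omega>. Z k \<omega> = (\<Sum>i. a i * eps (k - int i) \<omega>)"
    and Z_conv: "\<And>k. AE \<omega> in M. summable (\<lambda>i. a i * eps (k - int i) \<omega>)"
    and F_Z_def: "\<And>x. F_Z x = measure M {\<omega> \<in> space M. Z 0 \<omega> \<le> x}"
    and f_Z_density: "\<And>x. (F_Z has_real_derivative f_Z x) (at x)"
    and g_mono: "strict_mono g"
    and g_diff: "\<And>x. g differentiable (at x)"
  shows
    "((\<forall>x. f_eps differentiable (at x)) \<and>
      (\<exists>B. \<forall>x. f_eps x + \<bar>deriv f_eps x\<bar> \<le> B) \<longrightarrow>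
      (\<forall>\<alpha> q. \<alpha> > 0 \<and> q > 2 \<and>
         (\<forall>k. integrable M (\<lambda>\<omega>. \<bar>eps k \<omega>\<bar> powr \<alpha>)) \<and>
         summable (\<lambda>i. \<bar>a i\<bar> powr min (\<alpha> / q) 1) \<and>
         (\<lambda>n. \<Sum>i. \<bar>a (i + n)\<bar> powr min (\<alpha> / q) 1)
            \<in> O(\<lambda>n. ln (real n) powr (- 1 / q))
       \<longrightarrow> (\<forall>x. f_Z x > 0 \<longrightarrow>
              (AE \<omega> in M. (\<lambda>n. g_hat (\<lambda>i. g (Z (int i) \<omega>)) F_Z n x) \<longlonglongrightarrow> g x))))
     \<and>
     ((\<exists>f'. (\<forall>x. (f_eps has_real_derivative f' x) (at x)) \<and>
            (\<forall>x. f' differentiable (at x)) \<and>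
            (\<exists>B. \<forall>x. \<bar>deriv f' x\<bar> \<le> B)) \<longrightarrow>
      (\<forall>\<alpha> q c d. \<alpha> > 0 \<and> q \<ge> 2 \<and>
         (\<forall>k. integrable M (\<lambda>\<omega>. \<bar>eps k \<omega>\<bar> powr \<alpha>)) \<and>
         summable (\<lambda>i. \<bar>a (Suc i)\<bar> powr min (\<alpha> / q) 1) \<and>
         c \<le> d \<and> (INF x\<in>{c..d}. f_Z x) > 0
       \<longrightarrow> (AE \<omega> in M. (\<lambda>n. SUP x\<in>{c..d}.
                \<bar>g_hat (\<lambda>i. g (Z (int i) \<omega>)) F_Z n x - g x\<bar>) \<longlonglongrightarrow> 0)))"
proof -
  interpret prob_space M
    by (fact M)
  interpret iid_sequence M eps "density lborel f_eps"
    by (rule iid_sequence_density[OF indep eps_density])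
  have Z_eq: "Z k \<omega> = causal_filter a k (path \<omega>)" for k \<omega>
    by (simp add: Z_def causal_filter_def path_def)
  have F_Z: "F_Z y = prob {\<omega>\<in>space M. causal_filter a 0 (path \<omega>) \<le> y}" for y
    by (simp add: F_Z_def Z_eq)
  have "mono F_Z"
    unfolding F_Z by (intro monoI finite_measure_mono) auto
  have F_Z_bounds: "0 \<le> F_Z x \<and> F_Z x \<le> 1" for x
    by (simp add: F_Z_def)
  have g_cont: "isCont g x" for x
    using g_diff[of x] by (rule differentiable_imp_continuous_within)
  have lim: "AE \<omega> in M. \<forall>t\<in>\<rat>. (\<lambda>n. emp_cdf (\<lambda>i. Z (int i) \<omega>) n t) \<longlonglongrightarrow> F_Z t"
    unfolding Z_eq AE_ball_countable[OF countable_rat]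
    using Z_conv[of 0] by (intro ballI emp_cdf_causal_filter_tendsto[OF _ F_Z DERIV_isCont[OF f_Z_density]]) simp
  have "AE \<omega> in M. (\<lambda>n. g_hat (\<lambda>i. g (Z (int i) \<omega>)) F_Z n x) \<longlonglongrightarrow> g x" if "f_Z x > 0" for x
    using lim by eventually_elim (rule g_hat_tendsto[OF f_Z_density that g_cont g_mono], auto)
  moreover have "AE \<omega> in M. (\<lambda>n. SUP x\<in>{c..d}. \<bar>g_hat (\<lambda>i. g (Z (int i) \<omega>)) F_Z n x - g x\<bar>) \<longlonglongrightarrow> 0"
    if "c \<le> d" and "0 < (INF x\<in>{c..d}. f_Z x)" for c d
    using lim by eventually_elim
      (rule SUP_abs_g_hat_diff_tendsto_0[OF that(1) f_Z_density that(2) \<open>mono F_Z\<close> F_Z_bounds g_cont g_mono], auto)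
  ultimately show ?thesis
    by blast
qed

end
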